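(* Let $S$ be an entropy function for a finite set $X$, let $X'\subset X$, let $R$ be a new element not in $X$, $Y:=X'\cup\{R\}$, and let $T$ be the entropy function on $Y$ defined by $T(A):=S(A)$ and $T(A\cup\{R\}):=S(A\cup(X\setminus X'))$ for $A\subseteq X'$. Let $M:\mathbb R^X\to\mathbb R^Y$ be the linear map $(Mf)(x)=f(x)$ for $x\in X'$ and $(Mf)(R)=\sum_{x\in X\setminus X'}f(x)$. Then $F_T=M(F_S)$.
   Context: An entropy function for a finite set $X$ is a function $S:2^X\to[0,\infty)$ with $S(\emptyset)=0$, $S(A)+S(B)\ge S(A\cap B)+S(A\cup B)$ and $S(A)+S(B)\ge S(A\setminus B)+S(B\setminus A)$ for all $A,B\subseteq X$. An entanglement distribution function (EDF) for $S$ is a function $f:X\to\mathbb R$ (a vector in $\mathbb R^X$) with $\big|\sum_{x\in A}f(x)\big|\le S(A)$ for all $A\subseteq X$; $F_S$ denotes the set of all EDFs for $S$ (the entropohedron). *)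

theory Defs
  imports "HOL-Analysis.Analysis"
begin

definition entropy_function :: "'a set \<Rightarrow> ('a set \<Rightarrow> real) \<Rightarrow> bool" where
  "entropy_function X S \<longleftrightarrow> finite X \<and> S {} = 0 \<and>
     (\<forall>A. A \<subseteq> X \<longrightarrow> S A \<ge> 0) \<and>
     (\<forall>A B. A \<subseteq> X \<longrightarrow> B \<subseteq> X \<longrightarrow>
        S A + S B \<ge> S (A \<inter> B) + S (A \<union> B) \<and>
        S A + S B \<ge> S (A - B) + S (B - A))"

text \<open>Vectors in R^X are functions vanishing outside X.
  EDF set (entropohedron) F_S.\<close>
definition EDF :: "'a set \<Rightarrow> ('a set \<Rightarrow> real) \<Rightarrow> ('a \<Rightarrow> real) set" where
  "EDF X S = {f. (\<forall>x. x \<notin> X \<longrightarrow> f x = 0) \<and>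
                 (\<forall>A. A \<subseteq> X \<longrightarrow> \<bar>\<Sum>x\<in>A. f x\<bar> \<le> S A)}"

text \<open>Merging X - X' into a new element R = None; Y = Some ` X' \<union> {None}.\<close>
definition merge_Y :: "'a set \<Rightarrow> 'a option set" where
  "merge_Y X' = Some ` X' \<union> {None}"

definition merge_T :: "'a set \<Rightarrow> 'a set \<Rightarrow> ('a set \<Rightarrow> real) \<Rightarrow> 'a option set \<Rightarrow> real" where
  "merge_T X X' S B = (if None \<in> B then S ((the ` (B - {None})) \<union> (X - X'))
                       else S (the ` B))"

definition merge_M :: "'a set \<Rightarrow> 'a set \<Rightarrow> ('a \<Rightarrow> real) \<Rightarrow> 'a option \<Rightarrow> real" where
  "merge_M X X' f y = (case y of
       None \<Rightarrow> (\<Sum>x\<in>X - X'. f x)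
     | Some x \<Rightarrow> (if x \<in> X' then f x else 0))"

end

theory Submission
  imports Defs
begin

text \<open>
  The inclusion \<open>M(F\<^sub>S) \<subseteq> F\<^sub>T\<close> is a direct computation. Conversely, an EDF \<open>g\<close> for
  \<open>T\<close> prescribes values \<open>h\<close> on \<open>X'\<close> and the total \<open>\<gamma> = g(R)\<close> on \<open>Z = X - X'\<close>. A function
  \<open>\<phi>\<close> on \<open>Z\<close> extends \<open>h\<close> to an EDF for \<open>S\<close> iff \<open>-u(-h, C) \<le> \<phi>(C) \<le> u(h, C)\<close> for all
  \<open>C \<subseteq> Z\<close>, where \<open>u(h, C) = reduced_bound X' S h C\<close> is the minimum of \<open>S(A \<union> C) - h(A)\<close> over \<open>A \<subseteq> X'\<close>.
  Submodularity and posimodularity of \<open>S\<close> make \<open>(-u(-h, _), u(h, _))\<close> a paramodular pair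
  on \<open>Z\<close>, and for a paramodular pair \<open>(p, b)\<close> every value between \<open>p(Z)\<close> and \<open>b(Z)\<close> is the
  total of a modular function squeezed between \<open>p\<close> and \<open>b\<close>: the greedy algorithm gives
  such functions with totals \<open>b(Z)\<close> and \<open>p(Z)\<close>, and a convex combination of the two does
  the rest.
\<close>

definition submodular_on :: "'a set \<Rightarrow> ('a set \<Rightarrow> real) \<Rightarrow> bool" where
  "submodular_on Z b \<longleftrightarrow>
     (\<forall>C D. C \<subseteq> Z \<longrightarrow> D \<subseteq> Z \<longrightarrow> b (C \<inter> D) + b (C \<union> D) \<le> b C + b D)"

definition posimodular_on :: "'a set \<Rightarrow> ('a set \<Rightarrow> real) \<Rightarrow> bool" where
  "posimodular_on Z b \<longleftrightarrow>
     (\<forall>C D. C \<subseteq> Z \<longrightarrow> D \<subseteq> Z \<longrightarrow> b (C - D) + b (D - C) \<le> b C + b D)"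

lemma entropy_functionD:
  assumes "entropy_function X S"
  shows "finite X" "S {} = 0" "submodular_on X S" "posimodular_on X S"
  using assms unfolding entropy_function_def submodular_on_def posimodular_on_def by auto

subsection \<open>Modular functions between a paramodular pair\<close>

lemma submodular_base_exists:
  assumes "finite Z" "b {} = 0" "submodular_on Z b"
  shows "\<exists>f. sum f Z = b Z \<and> (\<forall>C\<subseteq>Z. sum f C \<le> b C)"
  using assms(1) subset_refl[of Z]
proof (induction Z rule: finite_subset_induct')
  case empty
  then show ?case using assms(2) by auto
next
  case (insert z Y)
  then obtain f0 where f0: "sum f0 Y = b Y" "\<forall>C\<subseteq>Y. sum f0 C \<le> b C" by auto
  define f where "f = f0(z := b (insert z Y) - b Y)"
  have sum_f: "sum f C = sum f0 C" if "C \<subseteq> Y" for C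
    using that insert.hyps(4) unfolding f_def by (intro sum.cong) auto
  have "sum f (insert z Y) = b (insert z Y)"
    using insert.hyps(1,4) sum_f[of Y] f0(1) by (simp add: f_def)
  moreover have "sum f C \<le> b C" if C: "C \<subseteq> insert z Y" for C
  proof (cases "z \<in> C")
    case False
    then have "C \<subseteq> Y" using C by auto
    then show ?thesis using sum_f f0(2) by auto
  next
    case True
    have CY: "C - {z} \<subseteq> Y" using C by auto
    have "finite C" using C insert.hyps(1) finite_subset by blast
    then have "sum f C = b (insert z Y) - b Y + sum f0 (C - {z})"
      using True sum_f[OF CY] by (simp add: sum.remove f_def)
    also have "\<dots> \<le> b (insert z Y) - b Y + b (C - {z})"
      using f0(2) CY by auto
    also have "\<dots> \<le> b C"
    proof -
      have "C \<inter> Y = C - {z}" "C \<union> Y = insert z Y"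
        using C True insert.hyps(4) by auto
      moreover have "b (C \<inter> Y) + b (C \<union> Y) \<le> b C + b Y"
        using assms(3) C insert.hyps(2,3) unfolding submodular_on_def by blast
      ultimately show ?thesis by simp
    qed
    finally show ?thesis .
  qed
  ultimately show ?case by auto
qed

text \<open>Paramodular pairs in the sense of Frank; the modular functions between them form a
  generalized polymatroid.\<close>

definition paramodular_on :: "'a set \<Rightarrow> ('a set \<Rightarrow> real) \<Rightarrow> ('a set \<Rightarrow> real) \<Rightarrow> bool" where
  "paramodular_on Z p b \<longleftrightarrow> p {} = 0 \<and> b {} = 0 \<and>
     submodular_on Z b \<and> submodular_on Z (\<lambda>C. - p C) \<and>
     (\<forall>C D. C \<subseteq> Z \<longrightarrow> D \<subseteq> Z \<longrightarrow> b (C - D) - p (D - C) \<le> b C - p D)"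

lemma paramodular_modular_between:
  assumes "finite Z" "paramodular_on Z p b" "p Z \<le> \<alpha>" "\<alpha> \<le> b Z"
  shows "\<exists>f. sum f Z = \<alpha> \<and> (\<forall>C\<subseteq>Z. p C \<le> sum f C \<and> sum f C \<le> b C)"
proof -
  have p0: "p {} = 0" and b0: "b {} = 0"
    and cross: "\<And>C D. C \<subseteq> Z \<Longrightarrow> D \<subseteq> Z \<Longrightarrow> b (C - D) - p (D - C) \<le> b C - p D"
    using assms(2) unfolding paramodular_on_def by auto
  have complement: "sum f C = sum f Z - sum f (Z - C)" if "C \<subseteq> Z" for f :: "'a \<Rightarrow> real" and C
    using sum.subset_diff[OF that assms(1), of f] by simp
  obtain f1 where f1: "sum f1 Z = b Z" "\<forall>C\<subseteq>Z. sum f1 C \<le> b C"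
    using submodular_base_exists[OF assms(1), of b] b0 assms(2) unfolding paramodular_on_def by blast
  obtain h where h: "sum h Z = - p Z" "\<forall>C\<subseteq>Z. sum h C \<le> - p C"
    using submodular_base_exists[OF assms(1), of "\<lambda>C. - p C"] p0 assms(2)
    unfolding paramodular_on_def by auto
  define f2 where "f2 x = - h x" for x
  have f2: "sum f2 C = - sum h C" for C
    unfolding f2_def by (simp add: sum_negf)
  have f1_between: "sum f1 C \<in> {p C..b C}" if "C \<subseteq> Z" for C
  proof -
    have "p (C - Z) = 0" using that p0 by (metis Diff_eq_empty_iff)
    then have "b (Z - C) \<le> b Z - p C"
      using cross[of Z C] that by auto
    moreover have "sum f1 (Z - C) \<le> b (Z - C)" "sum f1 C \<le> b C"
      using f1(2) that by auto
    ultimately show ?thesis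
      using complement[OF that, of f1] f1(1) by auto
  qed
  have f2_between: "sum f2 C \<in> {p C..b C}" if "C \<subseteq> Z" for C
  proof -
    have "b (C - Z) = 0" using that b0 by (metis Diff_eq_empty_iff)
    then have "- p (Z - C) \<le> b C - p Z"
      using cross[of C Z] that by auto
    moreover have "sum h (Z - C) \<le> - p (Z - C)" "sum h C \<le> - p C"
      using h(2) that by auto
    ultimately show ?thesis
      using complement[OF that, of h] h(1) f2[of C] by auto
  qed
  have "\<alpha> \<in> closed_segment (p Z) (b Z)"
    using assms(3,4) by (simp add: closed_segment_eq_real_ivl)
  then obtain t where t: "0 \<le> t" "t \<le> 1" "\<alpha> = (1 - t) * p Z + t * b Z"
    unfolding in_segment by auto
  define f where "f x = (1 - t) * f2 x + t * f1 x" for x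
  have sum_f: "sum f C = (1 - t) * sum f2 C + t * sum f1 C" for C
    unfolding f_def by (simp add: sum.distrib sum_distrib_left)
  have "sum f Z = \<alpha>"
    using sum_f f1(1) f2 h(1) t(3) by simp
  moreover have "sum f C \<in> {p C..b C}" if "C \<subseteq> Z" for C
    using convexD_alt[OF convex_real_interval(5) f2_between[OF that] f1_between[OF that] t(1,2)]
    by (simp add: sum_f)
  ultimately show ?thesis by auto
qed

subsection \<open>Extending an EDF from a subset\<close>

definition reduced_bound :: "'a set \<Rightarrow> ('a set \<Rightarrow> real) \<Rightarrow> ('a \<Rightarrow> real) \<Rightarrow> 'a set \<Rightarrow> real" where
  "reduced_bound X' S h C = Min ((\<lambda>A. S (A \<union> C) - sum h A) ` Pow X')"

lemma reduced_bound_le: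
  assumes "finite X'" "A \<subseteq> X'"
  shows "reduced_bound X' S h C \<le> S (A \<union> C) - sum h A"
  unfolding reduced_bound_def using assms by (intro Min_le) auto

lemma reduced_bound_attained:
  assumes "finite X'"
  obtains A where "A \<subseteq> X'" "reduced_bound X' S h C = S (A \<union> C) - sum h A"
proof -
  have "reduced_bound X' S h C \<in> (\<lambda>A. S (A \<union> C) - sum h A) ` Pow X'"
    unfolding reduced_bound_def using assms by (intro Min_in) auto
  then show ?thesis using that by auto
qed

lemma reduced_bound_empty:
  assumes "finite X'" "S {} = 0" "\<And>A. A \<subseteq> X' \<Longrightarrow> sum h A \<le> S A"
  shows "reduced_bound X' S h {} = 0"
proof -
  obtain A where "A \<subseteq> X'" "reduced_bound X' S h {} = S A - sum h A"
    using reduced_bound_attained[OF assms(1), of S h "{}"] by auto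
  then have "0 \<le> reduced_bound X' S h {}"
    using assms(3) by auto
  moreover have "reduced_bound X' S h {} \<le> 0"
    using reduced_bound_le[OF assms(1) empty_subsetI, of S h "{}"] assms(2) by simp
  ultimately show ?thesis by linarith
qed

lemma reduced_bound_submodular:
  assumes "submodular_on X S" "finite X'" "X' \<subseteq> X" "Z \<subseteq> X - X'"
  shows "submodular_on Z (reduced_bound X' S h)"
  unfolding submodular_on_def
proof (intro allI impI)
  fix C D assume CD: "C \<subseteq> Z" "D \<subseteq> Z"
  obtain A1 where A1: "A1 \<subseteq> X'" "reduced_bound X' S h C = S (A1 \<union> C) - sum h A1"
    using reduced_bound_attained[OF assms(2)] .
  obtain A2 where A2: "A2 \<subseteq> X'" "reduced_bound X' S h D = S (A2 \<union> D) - sum h A2"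
    using reduced_bound_attained[OF assms(2)] .
  have "A1 \<union> C \<subseteq> X" "A2 \<union> D \<subseteq> X"
    using A1(1) A2(1) CD assms(3,4) by auto
  moreover have "(A1 \<union> C) \<inter> (A2 \<union> D) = (A1 \<inter> A2) \<union> (C \<inter> D)"
    using A1(1) A2(1) CD assms(4) by blast
  moreover have "(A1 \<union> C) \<union> (A2 \<union> D) = (A1 \<union> A2) \<union> (C \<union> D)"
    by blast
  ultimately have "S ((A1 \<inter> A2) \<union> (C \<inter> D)) + S ((A1 \<union> A2) \<union> (C \<union> D)) \<le> S (A1 \<union> C) + S (A2 \<union> D)"
    using assms(1) unfolding submodular_on_def by metis
  moreover have "sum h A1 + sum h A2 = sum h (A1 \<inter> A2) + sum h (A1 \<union> A2)"
    using A1(1) A2(1) assms(2) finite_subset sum.union_inter by (metis add.commute)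
  moreover have "reduced_bound X' S h (C \<inter> D) \<le> S ((A1 \<inter> A2) \<union> (C \<inter> D)) - sum h (A1 \<inter> A2)"
    using A1(1) assms(2) by (intro reduced_bound_le) auto
  moreover have "reduced_bound X' S h (C \<union> D) \<le> S ((A1 \<union> A2) \<union> (C \<union> D)) - sum h (A1 \<union> A2)"
    using A1(1) A2(1) assms(2) by (intro reduced_bound_le) auto
  ultimately show "reduced_bound X' S h (C \<inter> D) + reduced_bound X' S h (C \<union> D)
      \<le> reduced_bound X' S h C + reduced_bound X' S h D"
    using A1(2) A2(2) by linarith
qed

lemma reduced_bound_posimodular:
  assumes "posimodular_on X S" "finite X'" "X' \<subseteq> X" "Z \<subseteq> X - X'" "C \<subseteq> Z" "D \<subseteq> Z"
  shows "reduced_bound X' S h (C - D) + reduced_bound X' S (\<lambda>x. - h x) (D - C)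
    \<le> reduced_bound X' S h C + reduced_bound X' S (\<lambda>x. - h x) D"
proof -
  obtain A1 where A1: "A1 \<subseteq> X'" "reduced_bound X' S h C = S (A1 \<union> C) - sum h A1"
    using reduced_bound_attained[OF assms(2)] .
  obtain A2 where A2: "A2 \<subseteq> X'"
    "reduced_bound X' S (\<lambda>x. - h x) D = S (A2 \<union> D) + sum h A2"
    using reduced_bound_attained[OF assms(2), of S "\<lambda>x. - h x" D] by (auto simp: sum_negf)
  have "A1 \<union> C \<subseteq> X" "A2 \<union> D \<subseteq> X"
    using A1(1) A2(1) assms(3-6) by auto
  moreover have "(A1 \<union> C) - (A2 \<union> D) = (A1 - A2) \<union> (C - D)"
    using A1(1) A2(1) assms(4-6) by blast
  moreover have "(A2 \<union> D) - (A1 \<union> C) = (A2 - A1) \<union> (D - C)"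
    using A1(1) A2(1) assms(4-6) by blast
  ultimately have "S ((A1 - A2) \<union> (C - D)) + S ((A2 - A1) \<union> (D - C)) \<le> S (A1 \<union> C) + S (A2 \<union> D)"
    using assms(1) unfolding posimodular_on_def by metis
  moreover have "sum h A1 = sum h (A1 - A2) + sum h (A1 \<inter> A2)"
    "sum h A2 = sum h (A2 - A1) + sum h (A1 \<inter> A2)"
    using A1(1) A2(1) assms(2) finite_subset sum.Int_Diff by (metis add.commute Int_commute)+
  moreover have "reduced_bound X' S h (C - D) \<le> S ((A1 - A2) \<union> (C - D)) - sum h (A1 - A2)"
    using A1(1) assms(2) by (intro reduced_bound_le) auto
  moreover have "reduced_bound X' S (\<lambda>x. - h x) (D - C) \<le> S ((A2 - A1) \<union> (D - C)) + sum h (A2 - A1)"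
    using reduced_bound_le[OF assms(2), of "A2 - A1" S "\<lambda>x. - h x" "D - C"] A2(1)
    by (auto simp: sum_negf)
  ultimately show ?thesis
    using A1(2) A2(2) by linarith
qed

lemma reduced_bounds_paramodular:
  assumes "entropy_function X S" "X' \<subseteq> X" "\<And>A. A \<subseteq> X' \<Longrightarrow> \<bar>sum h A\<bar> \<le> S A"
  shows "paramodular_on (X - X') (\<lambda>C. - reduced_bound X' S (\<lambda>x. - h x) C) (reduced_bound X' S h)"
proof -
  have fin: "finite X'"
    using entropy_functionD(1)[OF assms(1)] assms(2) finite_subset by blast
  have S0: "S {} = 0"
    using entropy_functionD(2)[OF assms(1)] .
  have "reduced_bound X' S h {} = 0"
    using assms(3) by (intro reduced_bound_empty[of X' S, OF fin S0]) (auto dest: abs_le_D1)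
  moreover have "reduced_bound X' S (\<lambda>x. - h x) {} = 0"
    using assms(3) by (intro reduced_bound_empty[of X' S, OF fin S0]) (auto simp: sum_negf dest: abs_le_D2)
  moreover have "submodular_on (X - X') (reduced_bound X' S g)" for g
    using reduced_bound_submodular[OF entropy_functionD(3)[OF assms(1)] fin assms(2)] by blast
  moreover have "reduced_bound X' S h (C - D) + reduced_bound X' S (\<lambda>x. - h x) (D - C)
      \<le> reduced_bound X' S h C + reduced_bound X' S (\<lambda>x. - h x) D"
    if "C \<subseteq> X - X'" "D \<subseteq> X - X'" for C D
    using reduced_bound_posimodular[OF entropy_functionD(4)[OF assms(1)] fin assms(2) subset_refl that] .
  ultimately show ?thesis
    unfolding paramodular_on_def by simp
qed

lemma EDF_extension:
  assumes "entropy_function X S" "X' \<subseteq> X"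
    and bound: "\<And>A. A \<subseteq> X' \<Longrightarrow> \<bar>sum h A\<bar> \<le> S A"
    and bound_total: "\<And>A. A \<subseteq> X' \<Longrightarrow> \<bar>sum h A + \<gamma>\<bar> \<le> S (A \<union> (X - X'))"
  obtains f where "f \<in> EDF X S" "\<And>x. x \<in> X' \<Longrightarrow> f x = h x" "sum f (X - X') = \<gamma>"
proof -
  define u where "u = reduced_bound X' S h"
  define u' where "u' = reduced_bound X' S (\<lambda>x. - h x)"
  have finX: "finite X"
    using entropy_functionD(1)[OF assms(1)] .
  then have finX': "finite X'"
    using assms(2) finite_subset by blast
  have u_le: "u C \<le> S (A \<union> C) - sum h A" if "A \<subseteq> X'" for A C
    using reduced_bound_le[OF finX' that] by (simp add: u_def)
  have u'_le: "u' C \<le> S (A \<union> C) + sum h A" if "A \<subseteq> X'" for A C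
    using reduced_bound_le[OF finX' that, of S "\<lambda>x. - h x" C] by (simp add: u'_def sum_negf)
  have "- u' (X - X') \<le> \<gamma>"
  proof -
    obtain A where "A \<subseteq> X'" "u' (X - X') = S (A \<union> (X - X')) + sum h A"
      using reduced_bound_attained[OF finX', of S "\<lambda>x. - h x" "X - X'"]
      unfolding u'_def by (auto simp: sum_negf)
    then show ?thesis using bound_total[of A] by auto
  qed
  moreover have "\<gamma> \<le> u (X - X')"
  proof -
    obtain A where "A \<subseteq> X'" "u (X - X') = S (A \<union> (X - X')) - sum h A"
      using reduced_bound_attained[OF finX'] unfolding u_def .
    then show ?thesis using bound_total[of A] by auto
  qed
  ultimately obtain \<phi> where \<phi>: "sum \<phi> (X - X') = \<gamma>"
    "\<And>C. C \<subseteq> X - X' \<Longrightarrow> - u' C \<le> sum \<phi> C \<and> sum \<phi> C \<le> u C"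
    using paramodular_modular_between[OF _ reduced_bounds_paramodular[OF assms(1-2) bound]] finX
    unfolding u_def u'_def by blast
  define f where "f x = (if x \<in> X' then h x else if x \<in> X then \<phi> x else 0)" for x
  have "f \<in> EDF X S"
    unfolding EDF_def
  proof (intro CollectI conjI allI impI)
    fix x assume "x \<notin> X"
    then show "f x = 0" using assms(2) by (auto simp: f_def)
  next
    fix A assume A: "A \<subseteq> X"
    have "sum f A = sum f (A \<inter> X') + sum f (A - X')"
      using A finX finite_subset sum.Int_Diff by blast
    also have "\<dots> = sum h (A \<inter> X') + sum \<phi> (A - X')"
      using A by (auto simp: f_def intro!: sum.cong)
    finally have "sum f A = sum h (A \<inter> X') + sum \<phi> (A - X')" .
    moreover have "- u' (A - X') \<le> sum \<phi> (A - X')" "sum \<phi> (A - X') \<le> u (A - X')"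
      using \<phi>(2)[of "A - X'"] A by auto
    moreover have "A \<inter> X' \<union> (A - X') = A"
      by blast
    ultimately show "\<bar>sum f A\<bar> \<le> S A"
      using u_le[of "A \<inter> X'" "A - X'"] u'_le[of "A \<inter> X'" "A - X'"] by auto
  qed
  moreover have "f x = h x" if "x \<in> X'" for x
    using that by (simp add: f_def)
  moreover have "sum f (X - X') = \<gamma>"
    using \<phi>(1) by (auto simp: f_def intro: sum.cong)
  ultimately show ?thesis using that by blast
qed

subsection \<open>Merging \<open>X - X'\<close> into one element\<close>

lemma subset_merge_Y_cases:
  assumes "B \<subseteq> merge_Y X'"
  obtains A where "A \<subseteq> X'" "B = Some ` A \<or> B = insert None (Some ` A)"
proof
  show "the ` (B - {None}) \<subseteq> X'"
    using assms unfolding merge_Y_def by auto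
  have "B - {None} = Some ` the ` (B - {None})"
    using assms unfolding merge_Y_def by (force simp: image_iff)
  then show "B = Some ` the ` (B - {None}) \<or> B = insert None (Some ` the ` (B - {None}))"
    by (cases "None \<in> B") auto
qed

lemma merge_T_Some_image [simp]: "merge_T X X' S (Some ` A) = S A"
  by (simp add: merge_T_def image_image)

lemma merge_T_insert_None [simp]: "merge_T X X' S (insert None (Some ` A)) = S (A \<union> (X - X'))"
  by (simp add: merge_T_def image_image)

lemma EDF_merge_iff:
  assumes "finite X'"
  shows "g \<in> EDF (merge_Y X') (merge_T X X' S) \<longleftrightarrow>
    (\<forall>v. v \<notin> merge_Y X' \<longrightarrow> g v = 0) \<and>
    (\<forall>A\<subseteq>X'. \<bar>\<Sum>x\<in>A. g (Some x)\<bar> \<le> S A \<and> \<bar>(\<Sum>x\<in>A. g (Some x)) + g None\<bar> \<le> S (A \<union> (X - X')))"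
proof -
  have sum_Some: "sum g (Some ` A) = (\<Sum>x\<in>A. g (Some x))" for A
    by (simp add: sum.reindex)
  have sum_None: "sum g (insert None (Some ` A)) = (\<Sum>x\<in>A. g (Some x)) + g None" if "A \<subseteq> X'" for A
    using finite_subset[OF that assms] by (simp add: sum_Some)
  have sub: "Some ` A \<subseteq> merge_Y X'" "insert None (Some ` A) \<subseteq> merge_Y X'" if "A \<subseteq> X'" for A
    using that unfolding merge_Y_def by auto
  show ?thesis
    unfolding EDF_def mem_Collect_eq
  proof (intro conj_cong refl iffI allI impI conjI)
    fix A assume "\<forall>B\<subseteq>merge_Y X'. \<bar>sum g B\<bar> \<le> merge_T X X' S B" "A \<subseteq> X'"
    then show "\<bar>\<Sum>x\<in>A. g (Some x)\<bar> \<le> S A" "\<bar>(\<Sum>x\<in>A. g (Some x)) + g None\<bar> \<le> S (A \<union> (X - X'))"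
      using sub[of A] sum_Some[of A] sum_None[of A] by (metis merge_T_Some_image merge_T_insert_None)+
  next
    fix B assume bounds: "\<forall>A\<subseteq>X'. \<bar>\<Sum>x\<in>A. g (Some x)\<bar> \<le> S A \<and> \<bar>(\<Sum>x\<in>A. g (Some x)) + g None\<bar> \<le> S (A \<union> (X - X'))"
      and "B \<subseteq> merge_Y X'"
    then obtain A where "A \<subseteq> X'" "B = Some ` A \<or> B = insert None (Some ` A)"
      by (elim subset_merge_Y_cases)
    then show "\<bar>sum g B\<bar> \<le> merge_T X X' S B"
      using bounds sum_Some[of A] sum_None[of A] by auto
  qed
qed

lemma merge_M_in_EDF:
  assumes "finite X" "X' \<subseteq> X" "f \<in> EDF X S"
  shows "merge_M X X' f \<in> EDF (merge_Y X') (merge_T X X' S)"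
  unfolding EDF_merge_iff[OF finite_subset[OF assms(2,1)]]
proof (intro conjI allI impI)
  fix v assume "v \<notin> merge_Y X'"
  then show "merge_M X X' f v = 0"
    unfolding merge_Y_def merge_M_def by (cases v) auto
next
  fix A assume A: "A \<subseteq> X'"
  have f_bound: "\<bar>sum f B\<bar> \<le> S B" if "B \<subseteq> X" for B
    using assms(3) that unfolding EDF_def by blast
  have sum_A: "(\<Sum>x\<in>A. merge_M X X' f (Some x)) = sum f A"
    using A by (intro sum.cong) (auto simp: merge_M_def)
  have "sum f A + sum f (X - X') = sum f (A \<union> (X - X'))"
    using A assms(1,2) by (subst sum.union_disjoint) (auto intro: finite_subset)
  then show "\<bar>\<Sum>x\<in>A. merge_M X X' f (Some x)\<bar> \<le> S A"
    "\<bar>(\<Sum>x\<in>A. merge_M X X' f (Some x)) + merge_M X X' f None\<bar> \<le> S (A \<union> (X - X'))"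
    using f_bound[of A] f_bound[of "A \<union> (X - X')"] A assms(2) sum_A
    by (auto simp: merge_M_def)
qed

theorem corollary25:
  fixes X X' :: "'a set" and S :: "'a set \<Rightarrow> real"
  assumes "entropy_function X S"
    and "X' \<subseteq> X"
  shows "EDF (merge_Y X') (merge_T X X' S) = merge_M X X' ` EDF X S"
proof (intro equalityI subsetI)
  have finX: "finite X"
    using entropy_functionD(1)[OF assms(1)] .
  fix g assume "g \<in> EDF (merge_Y X') (merge_T X X' S)"
  then have outside: "\<And>v. v \<notin> merge_Y X' \<Longrightarrow> g v = 0"
    and bounds: "\<And>A. A \<subseteq> X' \<Longrightarrow> \<bar>\<Sum>x\<in>A. g (Some x)\<bar> \<le> S A"
      "\<And>A. A \<subseteq> X' \<Longrightarrow> \<bar>(\<Sum>x\<in>A. g (Some x)) + g None\<bar> \<le> S (A \<union> (X - X'))"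
    using EDF_merge_iff[OF finite_subset[OF assms(2) finX]] by blast+
  obtain f where f: "f \<in> EDF X S" "\<And>x. x \<in> X' \<Longrightarrow> f x = g (Some x)" "sum f (X - X') = g None"
    using EDF_extension[OF assms bounds] by blast
  have "merge_M X X' f = g"
  proof
    fix v show "merge_M X X' f v = g v"
      using f(2,3) outside[of v] unfolding merge_M_def merge_Y_def by (cases v) auto
  qed
  then show "g \<in> merge_M X X' ` EDF X S"
    using f(1) by blast
next
  fix g assume "g \<in> merge_M X X' ` EDF X S"
  then show "g \<in> EDF (merge_Y X') (merge_T X X' S)"
    using merge_M_in_EDF[OF entropy_functionD(1)[OF assms(1)] assms(2)] by blast
qed

end
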